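(* Let $A\in M_N(\{0,1\})$ be primitive. The quantity $\tau(F_A)=\int F_A\,d\tau$ is independent of $\tau\in\mathcal M_{\sigma,e}$ if and only if there is a constant $c>0$ such that for every $n\in\mathbb N$ and every $\gamma=\gamma_1\cdots\gamma_n\in V_A^n$ with $A_{\gamma_n,\gamma_1}=1$, $$\frac1n\sum_{i=1}^nu_{\gamma_i}=c.$$ Moreover, this can happen only for $c=\sum_{i=1}^Np_iu_i$. Further, $F_A$ is constant if and only if all row-sums of $A$ are equal.
   Context: $A\in M_N(\{0,1\})$ primitive; $V_A^n$ is the set of words $\gamma_1\cdots\gamma_n$ over $\{1,\dots,N\}$ with $A_{\gamma_k,\gamma_{k+1}}=1$ for all $k$; $\Omega_A=\{x\in\{1,\dots,N\}^{\mathbb N}:A_{x_n,x_{n+1}}=1\ \forall n\}$ with left shift $\sigma$. $\mathcal M_{\sigma,e}$ denotes the set of $\sigma$-invariant ergodic Borel probability measures on $\Omega_A$. $\lambda_A$ is the Perron–Frobenius eigenvalue, $u>0$ with $Au=\lambda_Au$, $\sum u_i=1$, $v>0$ with $A^Tv=\lambda_Av$, $\sum u_iv_i=1$, $p_i=u_iv_i$, $P_{i,j}=A_{i,j}u_j/(\lambda_Au_i)$, and $F_A(x)=u_{x_1}(1-P_{x_1,x_2})$. *)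

theory Defs
  imports "HOL-Analysis.Analysis" "HOL-Probability.Probability"
begin

(* Matrices A in M_N({0,1}) are functions nat => nat => real, indices in {1..N}. *)

fun mpow :: "nat \<Rightarrow> (nat \<Rightarrow> nat \<Rightarrow> real) \<Rightarrow> nat \<Rightarrow> nat \<Rightarrow> nat \<Rightarrow> real" where
  "mpow N A 0 i j = (if i = j then 1 else 0)"
| "mpow N A (Suc k) i j = (\<Sum>l\<in>{1..N}. mpow N A k i l * A l j)"

definition zero_one_matrix :: "nat \<Rightarrow> (nat \<Rightarrow> nat \<Rightarrow> real) \<Rightarrow> bool" where
  "zero_one_matrix N A \<longleftrightarrow> (\<forall>i\<in>{1..N}. \<forall>j\<in>{1..N}. A i j = 0 \<or> A i j = 1)"

definition primitive :: "nat \<Rightarrow> (nat \<Rightarrow> nat \<Rightarrow> real) \<Rightarrow> bool" where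
  "primitive N A \<longleftrightarrow> (\<exists>k>0. \<forall>i\<in>{1..N}. \<forall>j\<in>{1..N}. mpow N A k i j > 0)"

(* V_A^n: admissible words gamma_1 ... gamma_n, stored as lists (index shifted by one) *)
definition words :: "nat \<Rightarrow> (nat \<Rightarrow> nat \<Rightarrow> real) \<Rightarrow> nat \<Rightarrow> nat list set" where
  "words N A n = {\<gamma>. length \<gamma> = n \<and> set \<gamma> \<subseteq> {1..N} \<and>
                     (\<forall>k. Suc k < n \<longrightarrow> A (\<gamma> ! k) (\<gamma> ! Suc k) = 1)}"

(* Omega_A, sequences indexed from 0 *)
definition Omega :: "nat \<Rightarrow> (nat \<Rightarrow> nat \<Rightarrow> real) \<Rightarrow> (nat \<Rightarrow> nat) set" where
  "Omega N A = {x. (\<forall>n. x n \<in> {1..N}) \<and> (\<forall>n. A (x n) (x (Suc n)) = 1)}"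

definition shift :: "(nat \<Rightarrow> nat) \<Rightarrow> (nat \<Rightarrow> nat)" where
  "shift x = (\<lambda>n. x (Suc n))"

(* Borel sigma-algebra of Omega_A (subspace of the product of discrete spaces) *)
definition Omega_borel :: "nat \<Rightarrow> (nat \<Rightarrow> nat \<Rightarrow> real) \<Rightarrow> (nat \<Rightarrow> nat) measure" where
  "Omega_borel N A = restrict_space borel (Omega N A)"

definition inv_erg_measures :: "nat \<Rightarrow> (nat \<Rightarrow> nat \<Rightarrow> real) \<Rightarrow> (nat \<Rightarrow> nat) measure set" where
  "inv_erg_measures N A = {\<tau>. sets \<tau> = sets (Omega_borel N A) \<and> prob_space \<tau> \<and>
      (\<forall>B\<in>sets \<tau>. emeasure \<tau> (shift -` B \<inter> space \<tau>) = emeasure \<tau> B) \<and>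
      (\<forall>B\<in>sets \<tau>. shift -` B \<inter> space \<tau> = B \<longrightarrow> measure \<tau> B = 0 \<or> measure \<tau> B = 1)}"

definition Pmat :: "(nat \<Rightarrow> nat \<Rightarrow> real) \<Rightarrow> real \<Rightarrow> (nat \<Rightarrow> real) \<Rightarrow> nat \<Rightarrow> nat \<Rightarrow> real" where
  "Pmat A lam u i j = A i j * u j / (lam * u i)"

definition F_A :: "(nat \<Rightarrow> nat \<Rightarrow> real) \<Rightarrow> real \<Rightarrow> (nat \<Rightarrow> real) \<Rightarrow> (nat \<Rightarrow> nat) \<Rightarrow> real" where
  "F_A A lam u x = u (x 0) * (1 - Pmat A lam u (x 0) (x 1))"

definition cycle_avg_const :: "nat \<Rightarrow> (nat \<Rightarrow> nat \<Rightarrow> real) \<Rightarrow> (nat \<Rightarrow> real) \<Rightarrow> real \<Rightarrow> bool" where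
  "cycle_avg_const N A u c \<longleftrightarrow>
     (\<forall>n\<ge>1. \<forall>\<gamma>\<in>words N A n. A (last \<gamma>) (hd \<gamma>) = 1 \<longrightarrow>
        (1 / real n) * (\<Sum>i<n. u (\<gamma> ! i)) = c)"

end

(*
  On Omega_A one has F_A(x) = u(x_0) - u(x_1) / lam, so shift invariance gives
  int F_A dtau = (1 - 1/lam) int u(x_0) dtau for every invariant tau.

  If all cycle averages of u equal c, then u - c is a coboundary h(x_1) - h(x_0) along the edges
  (a discrete Livsic theorem), hence int u(x_0) dtau = c for every invariant tau; integrating the
  same coboundary equation against the Parry measure yields c = sum_i p_i u_i. Conversely, the
  uniform measures on periodic orbits are ergodic and integrate u(x_0) to the cycle averages, so
  equal integrals force equal cycle averages when lam ~= 1; for lam = 1 the inequality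
  u_j <= lam u_i along edges already makes u constant.

  F_A is constant iff u is: a constant value C of F_A gives u_j = lam (u_i - C) along every edge,
  and iterating this injective map along walks of a common length joining any two vertices forces
  u_i = u_1. Finally u is constant iff all row sums of A are equal (then equal to lam), the
  converse direction by the maximum principle.
*)
theory Submission
  imports Defs
begin

section \<open>Walks in the graph of A\<close>

fun walk :: "nat \<Rightarrow> (nat \<Rightarrow> nat \<Rightarrow> real) \<Rightarrow> nat list \<Rightarrow> bool" where
  "walk N A [] = False"
| "walk N A [i] = (i \<in> {1..N})"
| "walk N A (i # j # w) = (i \<in> {1..N} \<and> A i j = 1 \<and> walk N A (j # w))"

lemma walk_iff_words: "walk N A w \<longleftrightarrow> w \<noteq> [] \<and> w \<in> words N A (length w)"
  by (induction w rule: induct_list012) (auto simp: words_def All_less_Suc2)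

lemma walk_not_Nil: "walk N A w \<Longrightarrow> w \<noteq> []"
  by auto

lemma set_walk: "walk N A w \<Longrightarrow> set w \<subseteq> {1..N}"
  by (induction w rule: walk.induct) auto

lemma walk_append:
  assumes "xs \<noteq> []" "ys \<noteq> []"
  shows "walk N A (xs @ ys) \<longleftrightarrow> walk N A xs \<and> walk N A ys \<and> A (last xs) (hd ys) = 1"
  using assms(1)
proof (induction xs rule: induct_list012)
  case (2 i)
  then show ?case
    using assms(2) by (cases ys) auto
qed auto

lemma walk_snoc:
  "xs \<noteq> [] \<Longrightarrow> walk N A (xs @ [j]) \<longleftrightarrow> walk N A xs \<and> j \<in> {1..N} \<and> A (last xs) j = 1"
  by (simp add: walk_append)

lemma walk_Cons:
  "w \<noteq> [] \<Longrightarrow> walk N A (i # w) \<longleftrightarrow> i \<in> {1..N} \<and> A i (hd w) = 1 \<and> walk N A w"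
  by (cases w) auto

lemma walk_last_if_edge_closed:
  assumes "walk N A w" "P (hd w)"
    and "\<And>i j. i \<in> {1..N} \<Longrightarrow> j \<in> {1..N} \<Longrightarrow> A i j = 1 \<Longrightarrow> P i \<Longrightarrow> P j"
  shows "P (last w)"
  using assms(1,2)
proof (induction w rule: induct_list012)
  case (3 i j w)
  then have "P j"
    using assms(3) set_walk[of N A "j # w"] by auto
  with 3 show ?case by simp
qed auto

lemma walk_funpow:
  assumes "walk N A w"
    and "\<And>i j. i \<in> {1..N} \<Longrightarrow> j \<in> {1..N} \<Longrightarrow> A i j = 1 \<Longrightarrow> g j = T (g i)"
  shows "g (last w) = (T ^^ (length w - 1)) (g (hd w))"
  using assms(1)
proof (induction w rule: induct_list012)
  case (3 i j w)
  then have "g j = T (g i)"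
    using assms(2) set_walk[of N A "j # w"] by auto
  with 3 show ?case by (simp add: funpow_swap1)
qed auto

lemma walk_butlast:
  assumes "walk N A w" "2 \<le> length w"
  shows "walk N A (butlast w) \<and> A (last (butlast w)) (last w) = 1 \<and> hd (butlast w) = hd w"
proof -
  have ne: "butlast w \<noteq> []"
    using assms(2) by (cases w) auto
  moreover have "w = butlast w @ [last w]"
    using walk_not_Nil[OF assms(1)] by simp
  ultimately show ?thesis
    using assms(1) walk_snoc[OF ne, of N A "last w"] by (metis hd_append2)
qed

lemma cycle_avg_const_iff:
  fixes u :: "nat \<Rightarrow> real" and c :: real
  shows "cycle_avg_const N A u c \<longleftrightarrow>
     (\<forall>w. walk N A w \<longrightarrow> A (last w) (hd w) = 1 \<longrightarrow> sum_list (map u w) = real (length w) * c)"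
proof -
  have "(1 / real (length w)) * (\<Sum>i<length w. u (w ! i)) = c \<longleftrightarrow> sum_list (map u w) = real (length w) * c"
    if "w \<noteq> []" for w
    using that by (auto simp: sum_list_sum_nth atLeast0LessThan field_simps)
  then show ?thesis
    unfolding cycle_avg_const_def walk_iff_words words_def
    by (auto simp: Suc_le_eq)
qed

lemma sum_list_pos_if_pos:
  fixes xs :: "'a :: ordered_comm_monoid_add list"
  assumes "xs \<noteq> []" "\<And>x. x \<in> set xs \<Longrightarrow> 0 < x"
  shows "0 < sum_list xs"
  using assms by (induction xs) (auto intro: add_pos_nonneg sum_list_nonneg less_imp_le)

lemma cycle_avg_const_if_const:
  fixes u :: "nat \<Rightarrow> real"
  assumes "\<forall>i\<in>{1..N}. u i = a"
  shows "cycle_avg_const N A u a"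
proof -
  have "sum_list (map u w) = real (length w) * a" if "walk N A w" for w
  proof -
    have "sum_list (map u w) = sum_list (map (\<lambda>_. a) w)"
      using assms set_walk[OF that] by (intro arg_cong[where f = sum_list] map_cong) auto
    then show ?thesis
      by (simp add: sum_list_triv)
  qed
  then show ?thesis
    by (simp add: cycle_avg_const_iff)
qed

locale primitive_01 =
  fixes N :: nat and A :: "nat \<Rightarrow> nat \<Rightarrow> real"
  assumes zero_one: "zero_one_matrix N A"
    and primitive: "primitive N A"
    and dim_pos: "0 < N"
begin

lemma entry_cases: "i \<in> {1..N} \<Longrightarrow> j \<in> {1..N} \<Longrightarrow> A i j = 0 \<or> A i j = 1"
  using zero_one by (auto simp: zero_one_matrix_def)

lemma entry_nonneg: "i \<in> {1..N} \<Longrightarrow> j \<in> {1..N} \<Longrightarrow> 0 \<le> A i j"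
  using entry_cases by force

lemma mpow_pos_imp_walk:
  assumes "i \<in> {1..N}" "j \<in> {1..N}" "0 < mpow N A k i j"
  shows "\<exists>w. walk N A w \<and> hd w = i \<and> last w = j \<and> length w = Suc k"
  using assms(2,3)
proof (induction k arbitrary: j)
  case 0
  then show ?case
    using assms(1) by (intro exI[of _ "[i]"]) (auto split: if_splits)
next
  case (Suc k)
  have "\<exists>l\<in>{1..N}. 0 < mpow N A k i l * A l j"
  proof (rule ccontr)
    assume "\<not> ?thesis"
    then have "(\<Sum>l\<in>{1..N}. mpow N A k i l * A l j) \<le> 0"
      by (intro sum_nonpos) (auto simp: not_less)
    with Suc.prems show False by simp
  qed
  then obtain l where l: "l \<in> {1..N}" "0 < mpow N A k i l" "A l j = 1"
    using entry_cases[OF _ Suc.prems(1)] by (metis mult_zero_right mult.right_neutral order_less_irrefl)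
  then obtain w where w: "walk N A w" "hd w = i" "last w = l" "length w = Suc k"
    using Suc.IH by blast
  then show ?case
    using l Suc.prems(1) walk_not_Nil[OF w(1)]
    by (intro exI[of _ "w @ [j]"]) (auto simp: walk_snoc)
qed

lemma uniform_walks:
  obtains k where "0 < k"
    "\<And>i j. i \<in> {1..N} \<Longrightarrow> j \<in> {1..N} \<Longrightarrow> \<exists>w. walk N A w \<and> hd w = i \<and> last w = j \<and> length w = Suc k"
  using primitive mpow_pos_imp_walk unfolding primitive_def by metis

lemma edge_closed_imp_all:
  assumes "i \<in> {1..N}" "P i" "j \<in> {1..N}"
    and "\<And>i j. i \<in> {1..N} \<Longrightarrow> j \<in> {1..N} \<Longrightarrow> A i j = 1 \<Longrightarrow> P i \<Longrightarrow> P j"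
  shows "P j"
proof -
  obtain k where "\<And>i j. i \<in> {1..N} \<Longrightarrow> j \<in> {1..N} \<Longrightarrow> \<exists>w. walk N A w \<and> hd w = i \<and> last w = j \<and> length w = Suc k"
    using uniform_walks by blast
  then obtain w where "walk N A w" "hd w = i" "last w = j"
    using assms(1,3) by blast
  then show ?thesis
    using walk_last_if_edge_closed[of N A w P] assms(2,4) by blast
qed

lemma closed_walk_exists: "\<exists>w. walk N A w \<and> A (last w) (hd w) = 1"
proof -
  obtain k where k: "0 < k"
    and walks: "\<And>i j. i \<in> {1..N} \<Longrightarrow> j \<in> {1..N} \<Longrightarrow> \<exists>w. walk N A w \<and> hd w = i \<and> last w = j \<and> length w = Suc k"
    using uniform_walks by blast
  then obtain w where "walk N A w" "hd w = 1" "last w = 1" "length w = Suc k"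
    using dim_pos by fastforce
  moreover have "2 \<le> length w"
    using \<open>length w = Suc k\<close> k by simp
  ultimately show ?thesis
    using walk_butlast[of N A w] by metis
qed

lemma successor_exists:
  assumes "i \<in> {1..N}"
  shows "\<exists>j\<in>{1..N}. A i j = 1"
proof -
  obtain k where k: "0 < k"
    and walks: "\<And>i j. i \<in> {1..N} \<Longrightarrow> j \<in> {1..N} \<Longrightarrow> \<exists>w. walk N A w \<and> hd w = i \<and> last w = j \<and> length w = Suc k"
    using uniform_walks by blast
  then obtain w where w: "walk N A w" "hd w = i" "length w = Suc k"
    using assms dim_pos by fastforce
  then obtain j w' where "w = i # j # w'"
    using k by (cases w rule: remdups_adj.cases) auto
  then show ?thesis
    using w(1) set_walk[of N A "j # w'"] by auto
qed

text \<open>The potential at \<open>j\<close> is minus the sum along a fixed walk from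
  \<open>j\<close> to the vertex 1, which by the hypothesis does not depend on the choice of that walk.\<close>
lemma closed_walk_sums_zero_imp_coboundary:
  fixes g :: "nat \<Rightarrow> real"
  assumes closed_zero: "\<And>w. walk N A w \<Longrightarrow> A (last w) (hd w) = 1 \<Longrightarrow> sum_list (map g w) = 0"
  shows "\<exists>h. \<forall>i\<in>{1..N}. \<forall>j\<in>{1..N}. A i j = 1 \<longrightarrow> g i = h j - h i"
proof -
  define W where "W w = sum_list (map g (butlast w))" for w
  have opposite: "W p + W q = 0"
    if p: "walk N A p" "2 \<le> length p" and q: "walk N A q" "2 \<le> length q"
      and pq: "last p = hd q" "last q = hd p" for p q
  proof -
    have ne: "butlast p \<noteq> []" "butlast q \<noteq> []"
      using p(2) q(2) by (auto simp: butlast_conv_take)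
    then have "walk N A (butlast p @ butlast q)" "A (last (butlast q)) (hd (butlast p)) = 1"
      using walk_butlast[OF p] walk_butlast[OF q] pq by (auto simp: walk_append)
    then have "sum_list (map g (butlast p @ butlast q)) = 0"
      using closed_zero[of "butlast p @ butlast q"] ne by simp
    then show ?thesis
      by (simp add: W_def)
  qed
  obtain k where k: "0 < k"
    and walks: "\<And>i j. i \<in> {1..N} \<Longrightarrow> j \<in> {1..N} \<Longrightarrow> \<exists>w. walk N A w \<and> hd w = i \<and> last w = j \<and> length w = Suc k"
    using uniform_walks by blast
  have one: "1 \<in> {1..N}"
    using dim_pos by simp
  obtain R where R: "\<And>j. j \<in> {1..N} \<Longrightarrow> walk N A (R j) \<and> hd (R j) = j \<and> last (R j) = 1 \<and> length (R j) = Suc k"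
    using walks[OF _ one] by metis
  obtain Q where Q: "\<And>j. j \<in> {1..N} \<Longrightarrow> walk N A (Q j) \<and> hd (Q j) = 1 \<and> last (Q j) = j \<and> length (Q j) = Suc k"
    using walks[OF one] by metis
  have "g i = W (R i) - W (R j)" if ij: "i \<in> {1..N}" "j \<in> {1..N}" "A i j = 1" for i j
  proof -
    have Rj: "R j \<noteq> []"
      using R[OF ij(2)] by auto
    have "walk N A (i # R j)"
      using R[OF ij(2)] ij Rj by (simp add: walk_Cons)
    then have "W (i # R j) + W (Q i) = 0"
      using opposite[of "i # R j" "Q i"] R[OF ij(2)] Q[OF ij(1)] Rj k by simp
    moreover have "W (R i) + W (Q i) = 0"
      using opposite[of "R i" "Q i"] R[OF ij(1)] Q[OF ij(1)] k by simp
    moreover have "W (i # R j) = g i + W (R j)"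
      using Rj by (simp add: W_def)
    ultimately show ?thesis
      by linarith
  qed
  then show ?thesis
    by (intro exI[of _ "\<lambda>j. - W (R j)"]) auto
qed

lemma cycle_avg_const_imp_coboundary:
  fixes u :: "nat \<Rightarrow> real"
  assumes "cycle_avg_const N A u c"
  shows "\<exists>h. \<forall>i\<in>{1..N}. \<forall>j\<in>{1..N}. A i j = 1 \<longrightarrow> u i - c = h j - h i"
proof (rule closed_walk_sums_zero_imp_coboundary)
  fix w assume "walk N A w" "A (last w) (hd w) = 1"
  then have "sum_list (map u w) = real (length w) * c"
    using assms by (simp add: cycle_avg_const_iff)
  then show "sum_list (map (\<lambda>i. u i - c) w) = 0"
    by (simp add: sum_list_subtractf sum_list_triv)
qed

lemma edge_extends_to_Omega:
  assumes "i \<in> {1..N}" "j \<in> {1..N}" "A i j = 1"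
  shows "\<exists>x\<in>Omega N A. x 0 = i \<and> x 1 = j"
proof -
  obtain s where s: "\<And>l. l \<in> {1..N} \<Longrightarrow> s l \<in> {1..N} \<and> A l (s l) = 1"
    using successor_exists by metis
  have iterate: "(s ^^ m) j \<in> {1..N}" for m
    using assms(2) s by (induction m) auto
  define x where "x m = (case m of 0 \<Rightarrow> i | Suc m \<Rightarrow> (s ^^ m) j)" for m
  have "x \<in> Omega N A"
    unfolding Omega_def
  proof (intro CollectI conjI allI)
    fix m
    show "x m \<in> {1..N}"
      using assms(1) iterate by (simp add: x_def split: nat.split)
    show "A (x m) (x (Suc m)) = 1"
      using assms(3) s iterate by (simp add: x_def split: nat.split)
  qed
  then show ?thesis
    by (intro bexI[of _ x]) (simp_all add: x_def)
qed

end

section \<open>Shift-invariant measures on Omega_A\<close>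

lemma space_Omega_borel [simp]: "space (Omega_borel N A) = Omega N A"
  by (simp add: Omega_borel_def space_restrict_space)

lemma OmegaD:
  assumes "x \<in> Omega N A"
  shows "x n \<in> {1..N}" and "A (x n) (x (Suc n)) = 1"
  using assms by (auto simp: Omega_def)

lemma measurable_coordinate [measurable]:
  "(\<lambda>x. f (x n) :: real) \<in> borel_measurable (Omega_borel N A)"
proof -
  have "continuous_on UNIV (\<lambda>x :: nat \<Rightarrow> nat. f (x n))"
    by (intro continuous_on_compose2[of UNIV f UNIV "\<lambda>x. x n"]) auto
  then show ?thesis
    unfolding Omega_borel_def by (intro measurable_restrict_space1 borel_measurable_continuous_onI)
qed

lemma measurable_shift [measurable]: "shift \<in> Omega_borel N A \<rightarrow>\<^sub>M Omega_borel N A"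
proof -
  have "continuous_on UNIV shift"
    unfolding shift_def by (intro continuous_on_coordinatewise_then_product) simp
  moreover have "shift \<in> Omega N A \<rightarrow> Omega N A"
    by (auto simp: Omega_def shift_def)
  ultimately show ?thesis
    unfolding Omega_borel_def
    by (intro measurable_restrict_space1 measurable_restrict_space2 borel_measurable_continuous_onI)
       (auto simp: space_restrict_space)
qed

context
  fixes \<tau> and N A
  assumes \<tau>: "\<tau> \<in> inv_erg_measures N A"
begin

lemma sets_inv_erg_measure [measurable_cong]: "sets \<tau> = sets (Omega_borel N A)"
  using \<tau> by (simp add: inv_erg_measures_def)

lemma space_inv_erg_measure: "space \<tau> = Omega N A"
  using sets_eq_imp_space_eq[OF sets_inv_erg_measure] by simp

lemma prob_space_inv_erg_measure: "prob_space \<tau>"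
  using \<tau> by (simp add: inv_erg_measures_def)

lemma distr_shift_inv_erg_measure: "distr \<tau> \<tau> shift = \<tau>"
proof (rule measure_eqI)
  fix B assume "B \<in> sets (distr \<tau> \<tau> shift)"
  then show "emeasure (distr \<tau> \<tau> shift) B = emeasure \<tau> B"
    using \<tau> measurable_shift[of N A] by (auto simp: inv_erg_measures_def emeasure_distr)
qed simp

lemma integral_shift:
  fixes f :: "(nat \<Rightarrow> nat) \<Rightarrow> real"
  assumes "f \<in> borel_measurable (Omega_borel N A)"
  shows "(\<integral>x. f (shift x) \<partial>\<tau>) = (\<integral>x. f x \<partial>\<tau>)"
proof -
  have "(\<integral>x. f (shift x) \<partial>\<tau>) = integral\<^sup>L (distr \<tau> \<tau> shift) f"
    using assms by (intro integral_distr[symmetric]) auto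
  then show ?thesis
    by (simp add: distr_shift_inv_erg_measure)
qed

lemma integrable_coordinate: "integrable \<tau> (\<lambda>x. (f :: nat \<Rightarrow> real) (x n))"
proof -
  interpret prob_space \<tau>
    by (rule prob_space_inv_erg_measure)
  have "\<bar>f (x n)\<bar> \<le> (\<Sum>i\<in>{1..N}. \<bar>f i\<bar>)" if "x \<in> space \<tau>" for x
    using that by (intro member_le_sum[of "x n" _ "\<lambda>i. \<bar>f i\<bar>"])
      (auto simp: space_inv_erg_measure Omega_def)
  then show ?thesis
    by (intro integrable_const_bound[of _ "\<Sum>i\<in>{1..N}. \<bar>f i\<bar>"]) auto
qed

lemma integral_coordinate_Suc: "(\<integral>x. (f :: nat \<Rightarrow> real) (x (Suc n)) \<partial>\<tau>) = (\<integral>x. f (x n) \<partial>\<tau>)"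
  using integral_shift[of "\<lambda>x. f (x n)"] by (simp add: shift_def)

lemma integral_coordinate_if_coboundary:
  fixes f h :: "nat \<Rightarrow> real"
  assumes "\<forall>i\<in>{1..N}. \<forall>j\<in>{1..N}. A i j = 1 \<longrightarrow> f i - c = h j - h i"
  shows "(\<integral>x. f (x 0) \<partial>\<tau>) = c"
proof -
  interpret prob_space \<tau>
    by (rule prob_space_inv_erg_measure)
  have "f (x 0) = c + (h (x 1) - h (x 0))" if "x \<in> space \<tau>" for x
  proof -
    have "x \<in> Omega N A"
      using that by (simp add: space_inv_erg_measure)
    then show ?thesis
      using assms[rule_format, of "x 0" "x 1"] OmegaD[of x N A 0] OmegaD(1)[of x N A 1] by simp
  qed
  then have "(\<integral>x. f (x 0) \<partial>\<tau>) = (\<integral>x. c + (h (x 1) - h (x 0)) \<partial>\<tau>)"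
    by (rule Bochner_Integration.integral_cong[OF refl])
  also have "\<dots> = c + ((\<integral>x. h (x (Suc 0)) \<partial>\<tau>) - (\<integral>x. h (x 0) \<partial>\<tau>))"
    by (simp add: integrable_coordinate prob_space)
  also have "\<dots> = c"
    by (simp add: integral_coordinate_Suc)
  finally show ?thesis .
qed

end

section \<open>Periodic orbit measures\<close>

lemma sum_lessThan_Suc_eq_if_periodic:
  fixes g :: "nat \<Rightarrow> 'a :: ab_group_add"
  assumes "g n = g 0"
  shows "(\<Sum>k<n. g (Suc k)) = (\<Sum>k<n. g k)"
  using sum.lessThan_Suc_shift[of g n] sum.lessThan_Suc[of g n] assms by (simp add: add.commute)

definition periodic_point :: "nat list \<Rightarrow> nat \<Rightarrow> nat \<Rightarrow> nat" where
  "periodic_point w k = (\<lambda>m. w ! ((k + m) mod length w))"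

definition orbit_measure :: "nat \<Rightarrow> (nat \<Rightarrow> nat \<Rightarrow> real) \<Rightarrow> nat list \<Rightarrow> (nat \<Rightarrow> nat) measure" where
  "orbit_measure N A w =
     distr (measure_pmf (pmf_of_set {..<length w})) (Omega_borel N A) (periodic_point w)"

lemma shift_periodic_point: "shift (periodic_point w k) = periodic_point w (Suc k)"
  by (simp add: shift_def periodic_point_def)

lemma periodic_point_length: "periodic_point w (length w) = periodic_point w 0"
  by (simp add: periodic_point_def fun_eq_iff)

lemma closed_walk_nth_edge:
  assumes "walk N A w" "A (last w) (hd w) = 1" "k < length w"
  shows "A (w ! k) (w ! (Suc k mod length w)) = 1"
proof (cases "Suc k < length w")
  case True
  then show ?thesis
    using assms(1) by (simp add: walk_iff_words words_def)
next
  case False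
  then have "k = length w - 1"
    using assms(3) by simp
  then show ?thesis
    using assms(2) walk_not_Nil[OF assms(1)] by (simp add: last_conv_nth hd_conv_nth)
qed

lemma periodic_point_in_Omega:
  assumes "walk N A w" "A (last w) (hd w) = 1"
  shows "periodic_point w k \<in> Omega N A"
proof -
  have pos: "0 < length w"
    using walk_not_Nil[OF assms(1)] by simp
  have "w ! ((k + m) mod length w) \<in> {1..N}" for m
    using set_walk[OF assms(1)] nth_mem[of "(k + m) mod length w" w] pos by fastforce
  moreover have "A (w ! ((k + m) mod length w)) (w ! ((k + Suc m) mod length w)) = 1" for m
    using closed_walk_nth_edge[OF assms, of "(k + m) mod length w"] pos by (simp add: mod_Suc_eq)
  ultimately show ?thesis
    by (simp add: Omega_def periodic_point_def)
qed

context
  fixes N A w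
  assumes closed_walk: "walk N A w" "A (last w) (hd w) = 1"
begin

lemma measurable_periodic_point [measurable]:
  "periodic_point w \<in> measure_pmf (pmf_of_set {..<length w}) \<rightarrow>\<^sub>M Omega_borel N A"
  using periodic_point_in_Omega[OF closed_walk] by simp

lemma integral_orbit_measure:
  fixes f :: "(nat \<Rightarrow> nat) \<Rightarrow> real"
  assumes "f \<in> borel_measurable (Omega_borel N A)"
  shows "(\<integral>x. f x \<partial>orbit_measure N A w) = (\<Sum>k<length w. f (periodic_point w k)) / length w"
proof -
  have "{..<length w} \<noteq> {}"
    using walk_not_Nil[OF closed_walk(1)] by auto
  then show ?thesis
    unfolding orbit_measure_def integral_distr[OF measurable_periodic_point assms]
    by (simp add: integral_pmf_of_set)
qed

lemma measure_orbit_measure: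
  assumes "B \<in> sets (Omega_borel N A)"
  shows "measure (orbit_measure N A w) B = (\<Sum>k<length w. indicator B (periodic_point w k)) / length w"
proof -
  have "measure (orbit_measure N A w) B = (\<integral>x. indicator B x \<partial>orbit_measure N A w)"
    using sets.sets_into_space[OF assms] by (simp add: orbit_measure_def Int_absorb2)
  also have "\<dots> = (\<Sum>k<length w. indicator B (periodic_point w k)) / length w"
    using assms by (intro integral_orbit_measure) simp
  finally show ?thesis .
qed

lemma orbit_measure_in_inv_erg_measures: "orbit_measure N A w \<in> inv_erg_measures N A"
proof -
  let ?\<mu> = "orbit_measure N A w" and ?n = "length w" and ?p = "periodic_point w"
  have sets: "sets ?\<mu> = sets (Omega_borel N A)" and space: "space ?\<mu> = Omega N A"
    by (simp_all add: orbit_measure_def)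
  interpret prob_space ?\<mu>
    unfolding orbit_measure_def
    by (intro prob_space.prob_space_distr prob_space_measure_pmf measurable_periodic_point)
  have preimage: "indicator (shift -` B \<inter> Omega N A) (?p k) = (indicator B (?p (Suc k)) :: real)" for B k
    using periodic_point_in_Omega[OF closed_walk] by (simp add: indicator_def shift_periodic_point)
  have invariant: "emeasure ?\<mu> (shift -` B \<inter> space ?\<mu>) = emeasure ?\<mu> B" if B: "B \<in> sets ?\<mu>" for B
  proof -
    have "shift -` B \<inter> Omega N A \<in> sets (Omega_borel N A)"
      using measurable_sets[OF measurable_shift, of B N A] B sets by simp
    then have "measure ?\<mu> (shift -` B \<inter> Omega N A) = (\<Sum>k<?n. indicator B (?p (Suc k))) / ?n"
      by (simp add: measure_orbit_measure preimage)
    also have "\<dots> = (\<Sum>k<?n. indicator B (?p k)) / ?n"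
      by (subst sum_lessThan_Suc_eq_if_periodic) (simp_all add: periodic_point_length)
    finally show ?thesis
      using B sets by (simp add: space emeasure_eq_measure measure_orbit_measure)
  qed
  have ergodic: "measure ?\<mu> B = 0 \<or> measure ?\<mu> B = 1"
    if B: "B \<in> sets ?\<mu>" and invariant_set: "shift -` B \<inter> space ?\<mu> = B" for B
  proof -
    have "indicator B (?p (Suc k)) = (indicator B (?p k) :: real)" for k
      using preimage[of B k] invariant_set by (simp add: space)
    then have orbit_constant: "indicator B (?p k) = (indicator B (?p 0) :: real)" for k
      by (induction k) simp_all
    have "measure ?\<mu> B = (\<Sum>k<?n. indicator B (?p k)) / ?n"
      using B sets by (simp add: measure_orbit_measure)
    also have "\<dots> = (\<Sum>k<?n. indicator B (?p 0)) / ?n"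
      by (intro arg_cong[where f = "\<lambda>s. s / _"] sum.cong refl orbit_constant)
    also have "\<dots> = indicator B (?p 0)"
      using walk_not_Nil[OF closed_walk(1)] by simp
    finally show ?thesis
      by (simp add: indicator_def)
  qed
  show ?thesis
    unfolding inv_erg_measures_def using sets prob_space_axioms invariant ergodic by blast
qed

lemma integral_coordinate_orbit_measure:
  "(\<integral>x. (f :: nat \<Rightarrow> real) (x 0) \<partial>orbit_measure N A w) = sum_list (map f w) / length w"
  by (simp add: integral_orbit_measure periodic_point_def sum_list_sum_nth atLeast0LessThan)

end

section \<open>The Perron eigenvector\<close>

locale primitive_eigen = primitive_01 +
  fixes lam :: real and u :: "nat \<Rightarrow> real"
  assumes lam_pos: "0 < lam"
    and u_pos: "\<forall>i\<in>{1..N}. 0 < u i"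
    and u_eig: "\<forall>i\<in>{1..N}. (\<Sum>j\<in>{1..N}. A i j * u j) = lam * u i"
begin

lemma F_A_Omega:
  assumes "x \<in> Omega N A"
  shows "F_A A lam u x = u (x 0) - u (x 1) / lam"
proof -
  have "0 < u (x 0)" "A (x 0) (x 1) = 1"
    using OmegaD[OF assms, of 0] u_pos by auto
  then show ?thesis
    using lam_pos by (simp add: F_A_def Pmat_def field_simps)
qed

lemma integral_F_A:
  assumes "\<tau> \<in> inv_erg_measures N A"
  shows "(\<integral>x. F_A A lam u x \<partial>\<tau>) = (1 - 1 / lam) * (\<integral>x. u (x 0) \<partial>\<tau>)"
proof -
  have "(\<integral>x. F_A A lam u x \<partial>\<tau>) = (\<integral>x. u (x 0) - u (x 1) / lam \<partial>\<tau>)"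
    using F_A_Omega by (intro Bochner_Integration.integral_cong) (simp_all add: space_inv_erg_measure[OF assms])
  also have "\<dots> = (\<integral>x. u (x 0) \<partial>\<tau>) - (\<integral>x. u (x (Suc 0)) \<partial>\<tau>) / lam"
    using integrable_coordinate[OF assms] by simp
  also have "\<dots> = (1 - 1 / lam) * (\<integral>x. u (x 0) \<partial>\<tau>)"
    by (simp add: integral_coordinate_Suc[OF assms] algebra_simps)
  finally show ?thesis .
qed

lemma cycle_avg_const_imp_integral_F_A:
  assumes "cycle_avg_const N A u c" "\<tau> \<in> inv_erg_measures N A"
  shows "(\<integral>x. F_A A lam u x \<partial>\<tau>) = (1 - 1 / lam) * c"
  using cycle_avg_const_imp_coboundary[OF assms(1)] integral_coordinate_if_coboundary[OF assms(2)]
    integral_F_A[OF assms(2)] by metis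

lemma u_le_if_edge:
  assumes "i \<in> {1..N}" "j \<in> {1..N}" "A i j = 1"
  shows "u j \<le> lam * u i"
proof -
  have "A i j * u j \<le> (\<Sum>l\<in>{1..N}. A i l * u l)"
    using assms(1,2) u_pos
    by (intro member_le_sum mult_nonneg_nonneg) (auto intro: entry_nonneg less_imp_le)
  then show ?thesis
    using assms u_eig by simp
qed

lemma u_const_if_lam_eq_1:
  assumes "lam = 1"
  shows "\<exists>a. \<forall>i\<in>{1..N}. u i = a"
proof -
  have "u j \<le> u i" if "i \<in> {1..N}" "j \<in> {1..N}" for i j
  proof (rule edge_closed_imp_all[of i "\<lambda>l. u l \<le> u i" j])
    fix a b assume "a \<in> {1..N}" "b \<in> {1..N}" "A a b = 1" "u a \<le> u i"
    then show "u b \<le> u i"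
      using u_le_if_edge[of a b] assms by simp
  qed (use that in simp_all)
  then show ?thesis
    using dim_pos by (intro exI[of _ "u 1"]) (auto intro: antisym)
qed

lemma integral_F_A_const_imp_cycle_avg_const:
  assumes "\<forall>\<tau>1\<in>inv_erg_measures N A. \<forall>\<tau>2\<in>inv_erg_measures N A.
             (\<integral>x. F_A A lam u x \<partial>\<tau>1) = (\<integral>x. F_A A lam u x \<partial>\<tau>2)"
  shows "\<exists>c>0. cycle_avg_const N A u c"
proof (cases "lam = 1")
  case True
  \<comment> \<open>Then all integrals of \<open>F_A\<close> vanish and carry no information, but \<open>u\<close> is constant.\<close>
  then obtain a where a: "\<forall>i\<in>{1..N}. u i = a"
    using u_const_if_lam_eq_1 by blast
  moreover have "0 < a"
    using a u_pos dim_pos by force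
  ultimately show ?thesis
    using cycle_avg_const_if_const by blast
next
  case False
  define avg where "avg w = sum_list (map u w) / length w" for w
  have integral_orbit: "(\<integral>x. F_A A lam u x \<partial>orbit_measure N A w) = (1 - 1 / lam) * avg w"
    if "walk N A w" "A (last w) (hd w) = 1" for w
    using integral_F_A[OF orbit_measure_in_inv_erg_measures[OF that]]
      integral_coordinate_orbit_measure[OF that] by (simp add: avg_def)
  obtain w0 where w0: "walk N A w0" "A (last w0) (hd w0) = 1"
    using closed_walk_exists by blast
  have "1 - 1 / lam \<noteq> 0"
    using False by simp
  then have avg_eq: "avg w = avg w0" if "walk N A w" "A (last w) (hd w) = 1" for w
    using assms integral_orbit[OF that] integral_orbit[OF w0]
      orbit_measure_in_inv_erg_measures[OF that] orbit_measure_in_inv_erg_measures[OF w0]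
    by (metis mult_cancel_left)
  have "sum_list (map u w) = real (length w) * avg w" if "walk N A w" for w
    using walk_not_Nil[OF that] by (simp add: avg_def)
  then have "sum_list (map u w) = real (length w) * avg w0" if "walk N A w" "A (last w) (hd w) = 1" for w
    using avg_eq[OF that] that(1) by simp
  then have "cycle_avg_const N A u (avg w0)"
    by (simp add: cycle_avg_const_iff)
  moreover have "0 < sum_list (map u w0)"
    using walk_not_Nil[OF w0(1)] set_walk[OF w0(1)] u_pos
    by (intro sum_list_pos_if_pos) auto
  then have "0 < avg w0"
    using walk_not_Nil[OF w0(1)] by (simp add: avg_def)
  ultimately show ?thesis
    by blast
qed

lemma F_A_const_iff_u_const:
  "(\<exists>C. \<forall>x\<in>Omega N A. F_A A lam u x = C) \<longleftrightarrow> (\<exists>a. \<forall>i\<in>{1..N}. u i = a)"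
proof
  assume "\<exists>C. \<forall>x\<in>Omega N A. F_A A lam u x = C"
  then obtain C where C: "\<forall>x\<in>Omega N A. F_A A lam u x = C"
    by blast
  define T where "T t = lam * (t - C)" for t
  have edge: "u j = T (u i)" if ij: "i \<in> {1..N}" "j \<in> {1..N}" "A i j = 1" for i j
  proof -
    obtain x where "x \<in> Omega N A" "x 0 = i" "x 1 = j"
      using edge_extends_to_Omega[OF ij] by blast
    then have "u i - u j / lam = C"
      using C F_A_Omega by force
    then show ?thesis
      using lam_pos by (simp add: T_def field_simps)
  qed
  \<comment> \<open>Any two vertices are joined by walks of one common length \<open>k + 1\<close>, and \<open>T ^^ k\<close> is injective.\<close>
  obtain k where "\<And>i j. i \<in> {1..N} \<Longrightarrow> j \<in> {1..N} \<Longrightarrow> \<exists>w. walk N A w \<and> hd w = i \<and> last w = j \<and> length w = Suc k"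
    using uniform_walks by blast
  then have iterate: "u j = (T ^^ k) (u i)" if "i \<in> {1..N}" "j \<in> {1..N}" for i j
    using walk_funpow[of N A _ u T] edge that by fastforce
  have "inj (T ^^ k)"
    using lam_pos by (intro inj_fn) (simp add: inj_def T_def)
  then have "u i = u 1" if "i \<in> {1..N}" for i
    using iterate[OF that, of 1] iterate[of 1 1] that dim_pos by (simp add: inj_eq)
  then show "\<exists>a. \<forall>i\<in>{1..N}. u i = a"
    by blast
next
  assume "\<exists>a. \<forall>i\<in>{1..N}. u i = a"
  then obtain a where "\<forall>i\<in>{1..N}. u i = a"
    by blast
  then have "F_A A lam u x = a - a / lam" if "x \<in> Omega N A" for x
    using F_A_Omega[OF that] OmegaD(1)[OF that] by simp
  then show "\<exists>C. \<forall>x\<in>Omega N A. F_A A lam u x = C"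
    by blast
qed

lemma row_sums_eq_lam_if_u_const:
  assumes "\<forall>i\<in>{1..N}. u i = a"
  shows "\<forall>i\<in>{1..N}. (\<Sum>j\<in>{1..N}. A i j) = lam"
proof
  fix i assume i: "i \<in> {1..N}"
  have "lam * a = (\<Sum>j\<in>{1..N}. A i j * a)"
    using u_eig assms i by simp
  also have "\<dots> = (\<Sum>j\<in>{1..N}. A i j) * a"
    by (simp add: sum_distrib_right)
  moreover have "0 < a"
    using assms u_pos i by force
  ultimately show "(\<Sum>j\<in>{1..N}. A i j) = lam"
    by simp
qed

context
  fixes v :: "nat \<Rightarrow> real"
  assumes v_eig: "\<forall>j\<in>{1..N}. (\<Sum>i\<in>{1..N}. A i j * v i) = lam * v j"
begin

lemma edge_sum_source:
  "(\<Sum>i\<in>{1..N}. \<Sum>j\<in>{1..N}. A i j * v i * u j * f i) = lam * (\<Sum>i\<in>{1..N}. u i * v i * f i)"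
proof -
  have "(\<Sum>i\<in>{1..N}. \<Sum>j\<in>{1..N}. A i j * v i * u j * f i) = (\<Sum>i\<in>{1..N}. v i * f i * (\<Sum>j\<in>{1..N}. A i j * u j))"
    by (simp add: sum_distrib_left mult_ac)
  also have "\<dots> = (\<Sum>i\<in>{1..N}. v i * f i * (lam * u i))"
    using u_eig by simp
  finally show ?thesis
    by (simp add: sum_distrib_left mult_ac)
qed

lemma edge_sum_target:
  "(\<Sum>i\<in>{1..N}. \<Sum>j\<in>{1..N}. A i j * v i * u j * f j) = lam * (\<Sum>j\<in>{1..N}. u j * v j * f j)"
proof -
  have "(\<Sum>i\<in>{1..N}. \<Sum>j\<in>{1..N}. A i j * v i * u j * f j) = (\<Sum>j\<in>{1..N}. u j * f j * (\<Sum>i\<in>{1..N}. A i j * v i))"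
    by (subst sum.swap) (simp add: sum_distrib_left mult_ac)
  also have "\<dots> = (\<Sum>j\<in>{1..N}. u j * f j * (lam * v j))"
    using v_eig by simp
  finally show ?thesis
    by (simp add: sum_distrib_left mult_ac)
qed

text \<open>This integrates the coboundary equation against the Parry measure, which gives the edge
  \<open>(i, j)\<close> the weight \<open>A i j * v i * u j / lam\<close>; by the two lemmas above both its marginals are \<open>u i * v i\<close>.\<close>
lemma coboundary_constant_eq:
  assumes uv_norm: "(\<Sum>i\<in>{1..N}. u i * v i) = 1"
    and coboundary: "\<forall>i\<in>{1..N}. \<forall>j\<in>{1..N}. A i j = 1 \<longrightarrow> u i - c = h j - h i"
  shows "c = (\<Sum>i\<in>{1..N}. (u i * v i) * u i)"
proof -
  have "A i j * v i * u j * (u i - c) = A i j * v i * u j * (h j - h i)"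
    if "i \<in> {1..N}" "j \<in> {1..N}" for i j
    using entry_cases[OF that] coboundary that by auto
  then have "A i j * v i * u j * (u i - c) = A i j * v i * u j * h j - A i j * v i * u j * h i"
    if "i \<in> {1..N}" "j \<in> {1..N}" for i j
    using that by (simp add: right_diff_distrib)
  then have "lam * (\<Sum>i\<in>{1..N}. u i * v i * (u i - c))
      = (\<Sum>i\<in>{1..N}. \<Sum>j\<in>{1..N}. A i j * v i * u j * h j) - (\<Sum>i\<in>{1..N}. \<Sum>j\<in>{1..N}. A i j * v i * u j * h i)"
    unfolding edge_sum_source[symmetric] by (simp add: sum_subtractf)
  also have "\<dots> = 0"
    unfolding edge_sum_source edge_sum_target by simp
  finally have "(\<Sum>i\<in>{1..N}. u i * v i * (u i - c)) = 0"
    using lam_pos by simp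
  then have "(\<Sum>i\<in>{1..N}. u i * v i * u i) - c * (\<Sum>i\<in>{1..N}. u i * v i) = 0"
    using lam_pos by (simp add: right_diff_distrib sum_subtractf sum_distrib_left mult_ac)
  then show ?thesis
    using uv_norm by simp
qed

lemma u_const_if_row_sums_const:
  assumes v_pos: "\<forall>j\<in>{1..N}. 0 < v j"
    and row_sums: "\<forall>i\<in>{1..N}. (\<Sum>j\<in>{1..N}. A i j) = r"
  shows "\<exists>a. \<forall>i\<in>{1..N}. u i = a"
proof -
  have "lam * (\<Sum>j\<in>{1..N}. v j) = (\<Sum>j\<in>{1..N}. \<Sum>i\<in>{1..N}. A i j * v i)"
    using v_eig by (simp add: sum_distrib_left)
  also have "\<dots> = (\<Sum>i\<in>{1..N}. v i * (\<Sum>j\<in>{1..N}. A i j))"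
    by (subst sum.swap) (simp add: sum_distrib_left mult_ac)
  also have "\<dots> = r * (\<Sum>j\<in>{1..N}. v j)"
    using row_sums by (simp add: sum_distrib_left mult_ac)
  finally have "lam = r"
    using v_pos dim_pos sum_pos[of "{1..N}" v] by simp
  \<comment> \<open>Maximum principle: now \<open>u i\<close> is the average of \<open>u\<close> over the successors of \<open>i\<close>.\<close>
  define M where "M = Max (u ` {1..N})"
  have le_M: "u i \<le> M" if "i \<in> {1..N}" for i
    using that by (simp add: M_def)
  have "M \<in> u ` {1..N}"
    unfolding M_def using dim_pos by (intro Max_in) auto
  then obtain i0 where i0: "i0 \<in> {1..N}" "u i0 = M"
    by blast
  have "u j = M" if ij: "i \<in> {1..N}" "j \<in> {1..N}" "A i j = 1" "u i = M" for i j
  proof -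
    have "(\<Sum>l\<in>{1..N}. A i l * (M - u l)) = (\<Sum>l\<in>{1..N}. A i l) * M - (\<Sum>l\<in>{1..N}. A i l * u l)"
      by (simp add: right_diff_distrib sum_subtractf sum_distrib_right)
    also have "\<dots> = r * M - lam * u i"
      using row_sums u_eig ij(1) by simp
    finally have "(\<Sum>l\<in>{1..N}. A i l * (M - u l)) = 0"
      using \<open>lam = r\<close> ij(4) by simp
    moreover have "\<forall>l\<in>{1..N}. 0 \<le> A i l * (M - u l)"
      using entry_nonneg[OF ij(1)] le_M by simp
    ultimately have "A i j * (M - u j) = 0"
      using sum_nonneg_eq_0_iff[of "{1..N}" "\<lambda>l. A i l * (M - u l)"] ij(2) by simp
    then show ?thesis
      using ij(3) by simp
  qed
  then have "u j = M" if "j \<in> {1..N}" for j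
    using edge_closed_imp_all[of i0 "\<lambda>l. u l = M" j] i0 that by blast
  then show ?thesis
    by blast
qed

end

end

theorem proposition3p3:
  fixes N :: nat and A :: "nat \<Rightarrow> nat \<Rightarrow> real"
    and lam :: real and u v :: "nat \<Rightarrow> real"
  assumes A01: "zero_one_matrix N A"
    and prim: "primitive N A"
    and lam_pos: "lam > 0"
    and u_pos: "\<forall>i\<in>{1..N}. u i > 0"
    and u_eig: "\<forall>i\<in>{1..N}. (\<Sum>j\<in>{1..N}. A i j * u j) = lam * u i"
    and u_norm: "(\<Sum>i\<in>{1..N}. u i) = 1"
    and v_pos: "\<forall>i\<in>{1..N}. v i > 0"
    and v_eig: "\<forall>j\<in>{1..N}. (\<Sum>i\<in>{1..N}. A i j * v i) = lam * v j"
    and uv_norm: "(\<Sum>i\<in>{1..N}. u i * v i) = 1"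
  shows "((\<forall>\<tau>1\<in>inv_erg_measures N A. \<forall>\<tau>2\<in>inv_erg_measures N A.
             (\<integral>x. F_A A lam u x \<partial>\<tau>1) = (\<integral>x. F_A A lam u x \<partial>\<tau>2))
          \<longleftrightarrow> (\<exists>c>0. cycle_avg_const N A u c))
     \<and> (\<forall>c>0. cycle_avg_const N A u c \<longrightarrow> c = (\<Sum>i\<in>{1..N}. (u i * v i) * u i))
     \<and> ((\<exists>C. \<forall>x\<in>Omega N A. F_A A lam u x = C)
          \<longleftrightarrow> (\<exists>r. \<forall>i\<in>{1..N}. (\<Sum>j\<in>{1..N}. A i j) = r))"
proof -
  have "0 < N"
    using u_norm by (cases N) simp_all
  interpret primitive_eigen N A lam u
    by unfold_locales (fact A01 prim \<open>0 < N\<close> lam_pos u_pos u_eig)+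
  have integrals: "(\<forall>\<tau>1\<in>inv_erg_measures N A. \<forall>\<tau>2\<in>inv_erg_measures N A.
             (\<integral>x. F_A A lam u x \<partial>\<tau>1) = (\<integral>x. F_A A lam u x \<partial>\<tau>2))
          \<longleftrightarrow> (\<exists>c>0. cycle_avg_const N A u c)"
    using integral_F_A_const_imp_cycle_avg_const cycle_avg_const_imp_integral_F_A by metis
  have cycle_avg_value: "c = (\<Sum>i\<in>{1..N}. (u i * v i) * u i)" if "cycle_avg_const N A u c" for c
    using cycle_avg_const_imp_coboundary[OF that] coboundary_constant_eq[OF v_eig uv_norm] by blast
  have row_sums: "(\<exists>C. \<forall>x\<in>Omega N A. F_A A lam u x = C)
          \<longleftrightarrow> (\<exists>r. \<forall>i\<in>{1..N}. (\<Sum>j\<in>{1..N}. A i j) = r)"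
    using F_A_const_iff_u_const row_sums_eq_lam_if_u_const u_const_if_row_sums_const[OF v_eig v_pos]
    by blast
  show ?thesis
    using integrals cycle_avg_value row_sums by blast
qed

end
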